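(* If there exists a T2R semigroup, then there exists a T2R semigroup $S=S_0\cup S_1$ which contains an element $b\in S_0$ with $|J_b|=2$ and $I(b)=\{0\}$.
   Context: A semigroup $S$ is a $\Delta$-semigroup if the lattice of all congruences of $S$ is a chain with respect to inclusion. A semigroup $N$ with zero $0$ is nil if every element has some power equal to $0$; non-trivial means having more than one element. A T2R semigroup is a $\Delta$-semigroup $S$ which is the disjoint union of a non-trivial nil ideal $S_0$ (with zero $0$, which is then the zero of $S$) and a subsemigroup $S_1$ which is a two-element right zero semigroup (i.e. $S_1=\{u,v\}$ with $xy=y$ for $x,y\in S_1$). $S^1$ denotes $S$ with an identity $1$ adjoined. For $a\in S$: $J(a)=S^1aS^1$, $J_a=\{s\in S:J(s)=J(a)\}$, $I(a)=J(a)\setminus J_a$. *)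

theory Defs
  imports Main
begin

definition semigroup_on :: "'a set \<Rightarrow> ('a \<Rightarrow> 'a \<Rightarrow> 'a) \<Rightarrow> bool" where
  "semigroup_on S f \<longleftrightarrow> (\<forall>x\<in>S. \<forall>y\<in>S. f x y \<in> S)
     \<and> (\<forall>x\<in>S. \<forall>y\<in>S. \<forall>z\<in>S. f (f x y) z = f x (f y z))"

definition congruence_on :: "'a set \<Rightarrow> ('a \<Rightarrow> 'a \<Rightarrow> 'a) \<Rightarrow> 'a rel \<Rightarrow> bool" where
  "congruence_on S f R \<longleftrightarrow> equiv S R
     \<and> (\<forall>a\<in>S. \<forall>b\<in>S. \<forall>c\<in>S. (a, b) \<in> R \<longrightarrow> (f c a, f c b) \<in> R \<and> (f a c, f b c) \<in> R)"

definition delta_semigroup :: "'a set \<Rightarrow> ('a \<Rightarrow> 'a \<Rightarrow> 'a) \<Rightarrow> bool" where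
  "delta_semigroup S f \<longleftrightarrow> semigroup_on S f
     \<and> (\<forall>R1 R2. congruence_on S f R1 \<longrightarrow> congruence_on S f R2 \<longrightarrow> R1 \<subseteq> R2 \<or> R2 \<subseteq> R1)"

(* spow f x n = x^(n+1) *)
fun spow :: "('a \<Rightarrow> 'a \<Rightarrow> 'a) \<Rightarrow> 'a \<Rightarrow> nat \<Rightarrow> 'a" where
  "spow f x 0 = x"
| "spow f x (Suc n) = f x (spow f x n)"

definition nil_semigroup_with_zero :: "'a set \<Rightarrow> ('a \<Rightarrow> 'a \<Rightarrow> 'a) \<Rightarrow> 'a \<Rightarrow> bool" where
  "nil_semigroup_with_zero N f z \<longleftrightarrow> semigroup_on N f \<and> z \<in> N
     \<and> (\<forall>x\<in>N. f z x = z \<and> f x z = z)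
     \<and> (\<forall>x\<in>N. \<exists>n. spow f x n = z)"

definition ideal_of :: "'a set \<Rightarrow> ('a \<Rightarrow> 'a \<Rightarrow> 'a) \<Rightarrow> 'a set \<Rightarrow> bool" where
  "ideal_of S f I \<longleftrightarrow> I \<subseteq> S \<and> I \<noteq> {} \<and> (\<forall>s\<in>S. \<forall>x\<in>I. f s x \<in> I \<and> f x s \<in> I)"

definition T2R :: "'a set \<Rightarrow> ('a \<Rightarrow> 'a \<Rightarrow> 'a) \<Rightarrow> 'a set \<Rightarrow> 'a set \<Rightarrow> 'a \<Rightarrow> bool" where
  "T2R S f S0 S1 z \<longleftrightarrow> delta_semigroup S f
     \<and> S = S0 \<union> S1 \<and> S0 \<inter> S1 = {}
     \<and> ideal_of S f S0 \<and> nil_semigroup_with_zero S0 f z \<and> card S0 \<noteq> 1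
     \<and> (\<exists>u v. u \<noteq> v \<and> S1 = {u, v} \<and> (\<forall>x\<in>S1. \<forall>y\<in>S1. f x y = y))"

(* J(a) = S^1 a S^1 *)
definition Jideal :: "'a set \<Rightarrow> ('a \<Rightarrow> 'a \<Rightarrow> 'a) \<Rightarrow> 'a \<Rightarrow> 'a set" where
  "Jideal S f a = {a} \<union> {f s a | s. s \<in> S} \<union> {f a t | t. t \<in> S} \<union> {f (f s a) t | s t. s \<in> S \<and> t \<in> S}"

definition Jclass :: "'a set \<Rightarrow> ('a \<Rightarrow> 'a \<Rightarrow> 'a) \<Rightarrow> 'a \<Rightarrow> 'a set" where
  "Jclass S f a = {s \<in> S. Jideal S f s = Jideal S f a}"

definition Iideal :: "'a set \<Rightarrow> ('a \<Rightarrow> 'a \<Rightarrow> 'a) \<Rightarrow> 'a \<Rightarrow> 'a set" where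
  "Iideal S f a = Jideal S f a - Jclass S f a"

end

theory Submission
  imports Defs
begin

text \<open>
  In a T2R semigroup \<open>S = S\<^sub>0 \<union> {u, v}\<close> some \<open>c \<in> S\<^sub>0\<close> separates \<open>u\<close> and \<open>v\<close>, i.e. \<open>cu \<noteq> cv\<close>:
  otherwise the Rees congruence of \<open>S\<^sub>0\<close> and the congruence collapsing only \<open>u\<close> and \<open>v\<close>
  would be incomparable. In a \<open>\<Delta>\<close>-semigroup the congruences not identifying \<open>p = cu\<close> and
  \<open>q = cv\<close> form a chain, so their union \<open>\<mu>\<close> is the largest such congruence. The quotient
  \<open>S/\<mu>\<close> is again T2R, and every congruence of it that does not identify the classes of \<open>p\<close>
  and \<open>q\<close> is trivial. Since \<open>q = pv\<close> and \<open>p = qu\<close>, the J-class of \<open>b = [p]\<close> is \<open>{[p], [q]}\<close>.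
  The elements whose principal ideal misses \<open>b\<close> form an ideal whose Rees congruence does not
  identify \<open>[p]\<close> and \<open>[q]\<close>; hence that ideal is \<open>{0}\<close>, which means \<open>I(b) = {0}\<close>.
\<close>

text \<open>Elements of \<open>S\<^sup>1\<close> are encoded as \<open>'a option\<close>, with \<open>None\<close> the adjoined identity.\<close>

definition one_adjoined :: "'a set \<Rightarrow> 'a option set" where
  "one_adjoined S = insert None (Some ` S)"

definition lmult :: "('a \<Rightarrow> 'a \<Rightarrow> 'a) \<Rightarrow> 'a option \<Rightarrow> 'a \<Rightarrow> 'a" where
  "lmult f s x = (case s of None \<Rightarrow> x | Some a \<Rightarrow> f a x)"

definition rmult :: "('a \<Rightarrow> 'a \<Rightarrow> 'a) \<Rightarrow> 'a \<Rightarrow> 'a option \<Rightarrow> 'a" where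
  "rmult f x t = (case t of None \<Rightarrow> x | Some a \<Rightarrow> f x a)"

definition mult1 :: "('a \<Rightarrow> 'a \<Rightarrow> 'a) \<Rightarrow> 'a option \<Rightarrow> 'a option \<Rightarrow> 'a option" where
  "mult1 f s t =
     (case s of None \<Rightarrow> t | Some a \<Rightarrow> (case t of None \<Rightarrow> Some a | Some b \<Rightarrow> Some (f a b)))"

lemma Jideal_one_adjoined:
  "Jideal S f a = {rmult f (lmult f s a) t |s t. s \<in> one_adjoined S \<and> t \<in> one_adjoined S}"
proof (intro set_eqI iffI)
  fix x assume "x \<in> Jideal S f a"
  then consider "x = rmult f (lmult f None a) None"
    | s where "s \<in> S" "x = rmult f (lmult f (Some s) a) None"
    | t where "t \<in> S" "x = rmult f (lmult f None a) (Some t)"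
    | s t where "s \<in> S" "t \<in> S" "x = rmult f (lmult f (Some s) a) (Some t)"
    unfolding Jideal_def lmult_def rmult_def by auto
  then show "x \<in> {rmult f (lmult f s a) t |s t. s \<in> one_adjoined S \<and> t \<in> one_adjoined S}"
    by cases (auto simp: one_adjoined_def)
next
  fix x assume "x \<in> {rmult f (lmult f s a) t |s t. s \<in> one_adjoined S \<and> t \<in> one_adjoined S}"
  then show "x \<in> Jideal S f a"
    unfolding Jideal_def one_adjoined_def lmult_def rmult_def by auto
qed

lemma self_in_Jideal: "a \<in> Jideal S f a"
  unfolding Jideal_def by auto

lemma left_in_Jideal: "s \<in> S \<Longrightarrow> f s a \<in> Jideal S f a"
  unfolding Jideal_def by auto

lemma right_in_Jideal: "t \<in> S \<Longrightarrow> f a t \<in> Jideal S f a"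
  unfolding Jideal_def by auto

lemma congruence_onI:
  assumes "R \<subseteq> S \<times> S" "\<And>x. x \<in> S \<Longrightarrow> (x, x) \<in> R" "sym R" "trans R"
    and "\<And>a b c. (a, b) \<in> R \<Longrightarrow> c \<in> S \<Longrightarrow> (f c a, f c b) \<in> R \<and> (f a c, f b c) \<in> R"
  shows "congruence_on S f R"
  unfolding congruence_on_def equiv_def refl_on_def using assms by blast

lemma congruence_on_compat:
  "congruence_on S f R \<Longrightarrow> (a, b) \<in> R \<Longrightarrow> c \<in> S \<Longrightarrow> (f c a, f c b) \<in> R \<and> (f a c, f b c) \<in> R"
  unfolding congruence_on_def equiv_def refl_on_def by blast

lemma congruence_on_memD: "congruence_on S f R \<Longrightarrow> (a, b) \<in> R \<Longrightarrow> a \<in> S \<and> b \<in> S"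
  unfolding congruence_on_def equiv_def refl_on_def by blast

lemma congruence_on_subset: "congruence_on S f R \<Longrightarrow> R \<subseteq> S \<times> S"
  unfolding congruence_on_def equiv_def refl_on_def by blast

lemma congruence_on_refl: "congruence_on S f R \<Longrightarrow> x \<in> S \<Longrightarrow> (x, x) \<in> R"
  unfolding congruence_on_def equiv_def refl_on_def by blast

lemma congruence_on_sym: "congruence_on S f R \<Longrightarrow> (a, b) \<in> R \<Longrightarrow> (b, a) \<in> R"
  unfolding congruence_on_def equiv_def sym_def by blast

lemma congruence_on_trans:
  "congruence_on S f R \<Longrightarrow> (a, b) \<in> R \<Longrightarrow> (b, c) \<in> R \<Longrightarrow> (a, c) \<in> R"
  unfolding congruence_on_def equiv_def trans_def by blast

lemma congruence_on_mult:
  assumes R: "congruence_on S f R" and "(a, b) \<in> R" "(c, d) \<in> R"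
  shows "(f a c, f b d) \<in> R"
proof -
  have "(f a c, f b c) \<in> R" using assms congruence_on_compat congruence_on_memD by metis
  moreover have "(f b c, f b d) \<in> R" using assms congruence_on_compat congruence_on_memD by metis
  ultimately show ?thesis using congruence_on_trans[OF R] by blast
qed

lemma congruence_on_Union_chain:
  assumes "\<R> \<noteq> {}" and cong: "\<And>R. R \<in> \<R> \<Longrightarrow> congruence_on S f R"
    and chain: "\<And>R1 R2. R1 \<in> \<R> \<Longrightarrow> R2 \<in> \<R> \<Longrightarrow> R1 \<subseteq> R2 \<or> R2 \<subseteq> R1"
  shows "congruence_on S f (\<Union>\<R>)"
proof (rule congruence_onI)
  show "\<Union>\<R> \<subseteq> S \<times> S" using congruence_on_subset[OF cong] by (intro Union_least)
  show "(x, x) \<in> \<Union>\<R>" if "x \<in> S" for x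
    using assms(1) congruence_on_refl[OF cong that] by blast
  show "sym (\<Union>\<R>)" unfolding sym_def using congruence_on_sym[OF cong] by blast
  show "trans (\<Union>\<R>)" unfolding trans_def
  proof (intro allI impI)
    fix x y w assume "(x, y) \<in> \<Union>\<R>" "(y, w) \<in> \<Union>\<R>"
    then obtain R1 R2 where R: "R1 \<in> \<R>" "(x, y) \<in> R1" "R2 \<in> \<R>" "(y, w) \<in> R2" by blast
    then have "(x, w) \<in> R1 \<or> (x, w) \<in> R2"
      using chain[OF R(1,3)] congruence_on_trans[OF cong] by blast
    then show "(x, w) \<in> \<Union>\<R>" using R by blast
  qed
  show "(f c a, f c b) \<in> \<Union>\<R> \<and> (f a c, f b c) \<in> \<Union>\<R>" if "(a, b) \<in> \<Union>\<R>" "c \<in> S" for a b c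
    using that congruence_on_compat[OF cong] by blast
qed

definition rees_congruence :: "'a set \<Rightarrow> 'a set \<Rightarrow> 'a rel" where
  "rees_congruence S I = Id_on S \<union> I \<times> I"

locale carrier_semigroup =
  fixes S :: "'a set" and f :: "'a \<Rightarrow> 'a \<Rightarrow> 'a"
  assumes semigroup: "semigroup_on S f"
begin

lemma closed [simp, intro]: "x \<in> S \<Longrightarrow> y \<in> S \<Longrightarrow> f x y \<in> S"
  using semigroup unfolding semigroup_on_def by blast

lemma assoc: "x \<in> S \<Longrightarrow> y \<in> S \<Longrightarrow> w \<in> S \<Longrightarrow> f (f x y) w = f x (f y w)"
  using semigroup unfolding semigroup_on_def by blast

lemma lmult_closed [simp, intro]: "s \<in> one_adjoined S \<Longrightarrow> x \<in> S \<Longrightarrow> lmult f s x \<in> S"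
  unfolding one_adjoined_def lmult_def by auto

lemma rmult_closed [simp, intro]: "t \<in> one_adjoined S \<Longrightarrow> x \<in> S \<Longrightarrow> rmult f x t \<in> S"
  unfolding one_adjoined_def rmult_def by auto

lemma mult1_closed [simp, intro]:
  "s \<in> one_adjoined S \<Longrightarrow> t \<in> one_adjoined S \<Longrightarrow> mult1 f s t \<in> one_adjoined S"
  unfolding one_adjoined_def mult1_def by auto

lemma lmult_lmult:
  "s \<in> one_adjoined S \<Longrightarrow> t \<in> one_adjoined S \<Longrightarrow> x \<in> S \<Longrightarrow>
    lmult f s (lmult f t x) = lmult f (mult1 f s t) x"
  unfolding one_adjoined_def mult1_def lmult_def by (auto simp: assoc)

lemma rmult_rmult:
  "s \<in> one_adjoined S \<Longrightarrow> t \<in> one_adjoined S \<Longrightarrow> x \<in> S \<Longrightarrow>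
    rmult f (rmult f x s) t = rmult f x (mult1 f s t)"
  unfolding one_adjoined_def mult1_def rmult_def by (auto simp: assoc)

lemma lmult_rmult:
  "s \<in> one_adjoined S \<Longrightarrow> t \<in> one_adjoined S \<Longrightarrow> x \<in> S \<Longrightarrow>
    lmult f s (rmult f x t) = rmult f (lmult f s x) t"
  unfolding one_adjoined_def rmult_def lmult_def by (auto simp: assoc)

lemma spow_closed: "x \<in> S \<Longrightarrow> spow f x n \<in> S"
  by (induction n) auto

lemma spow_commute: "x \<in> S \<Longrightarrow> f (spow f x n) x = f x (spow f x n)"
  by (induction n) (auto simp: assoc spow_closed)

lemma Jideal_subset: "a \<in> S \<Longrightarrow> Jideal S f a \<subseteq> S"
  unfolding Jideal_one_adjoined by auto

lemma Jideal_subset_Jideal: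
  assumes "a \<in> S" "x \<in> Jideal S f a"
  shows "Jideal S f x \<subseteq> Jideal S f a"
proof
  fix y assume "y \<in> Jideal S f x"
  then obtain s t where st: "s \<in> one_adjoined S" "t \<in> one_adjoined S" "y = rmult f (lmult f s x) t"
    unfolding Jideal_one_adjoined by auto
  from assms obtain s' t' where st': "s' \<in> one_adjoined S" "t' \<in> one_adjoined S"
    "x = rmult f (lmult f s' a) t'"
    unfolding Jideal_one_adjoined by auto
  have "y = rmult f (lmult f (mult1 f s s') a) (mult1 f t' t)"
    using st st' assms by (simp add: lmult_rmult[symmetric] lmult_lmult rmult_rmult)
  then show "y \<in> Jideal S f a" unfolding Jideal_one_adjoined using st st' by blast
qed

lemma Iideal_iff:
  assumes "a \<in> S"
  shows "y \<in> Iideal S f a \<longleftrightarrow> y \<in> Jideal S f a \<and> a \<notin> Jideal S f y"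
proof (cases "y \<in> Jideal S f a")
  case True
  then have y: "y \<in> S" and sub: "Jideal S f y \<subseteq> Jideal S f a"
    using Jideal_subset[OF assms] Jideal_subset_Jideal[OF assms] by auto
  have "a \<in> Jideal S f y \<longleftrightarrow> Jideal S f a \<subseteq> Jideal S f y"
    using self_in_Jideal[of a S f] Jideal_subset_Jideal[OF y] by blast
  with True y sub show ?thesis unfolding Iideal_def Jclass_def by auto
next
  case False
  then show ?thesis unfolding Iideal_def by simp
qed

lemma ideal_of_not_above:
  assumes "y \<in> S" "a \<notin> Jideal S f y"
  shows "ideal_of S f {y \<in> S. a \<notin> Jideal S f y}"
  unfolding ideal_of_def
proof (intro conjI ballI)
  fix s x assume s: "s \<in> S" and x: "x \<in> {y \<in> S. a \<notin> Jideal S f y}"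
  then have "Jideal S f (f s x) \<subseteq> Jideal S f x" "Jideal S f (f x s) \<subseteq> Jideal S f x"
    using Jideal_subset_Jideal[of x] left_in_Jideal[OF s] right_in_Jideal[OF s] by simp_all
  then show "f s x \<in> {y \<in> S. a \<notin> Jideal S f y}" "f x s \<in> {y \<in> S. a \<notin> Jideal S f y}"
    using s x by auto
qed (use assms in auto)

lemma congruence_on_Id_on: "congruence_on S f (Id_on S)"
  by (rule congruence_onI) (auto simp: sym_def trans_def)

lemma congruence_on_rees:
  assumes "ideal_of S f I"
  shows "congruence_on S f (rees_congruence S I)"
  using assms unfolding rees_congruence_def ideal_of_def
  by (intro congruence_onI) (auto simp: sym_def trans_def)

lemma congruence_on_largest_separating:
  assumes "delta_semigroup S f" "p \<noteq> q"
  shows "congruence_on S f (\<Union>{R. congruence_on S f R \<and> (p, q) \<notin> R})"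
  using assms congruence_on_Id_on unfolding delta_semigroup_def
  by (intro congruence_on_Union_chain) auto

lemma eq_zero_if_nilpotent_left_factor:
  assumes zero: "\<And>x. x \<in> S \<Longrightarrow> f z x = z \<and> f x z = z"
    and a: "a \<in> S" and s: "s \<in> S" "spow f s n = z" and t: "t \<in> one_adjoined S"
    and eq: "a = rmult f (f s a) t"
  shows "a = z"
proof -
  have "\<exists>t'\<in>one_adjoined S. a = rmult f (f (spow f s k) a) t'" for k
  proof (induction k)
    case 0 then show ?case using t eq by auto
  next
    case (Suc k)
    then obtain t' where t': "t' \<in> one_adjoined S" "a = rmult f (f (spow f s k) a) t'" by auto
    have sk: "spow f s k \<in> S" using spow_closed s by auto
    have "f (spow f s k) a = lmult f (Some (spow f s k)) (rmult f (f s a) t)"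
      using eq by (simp add: lmult_def)
    also have "\<dots> = rmult f (f (spow f s k) (f s a)) t"
      using sk t a s by (subst lmult_rmult) (auto simp: one_adjoined_def lmult_def)
    also have "f (spow f s k) (f s a) = f (spow f s (Suc k)) a"
      using sk s a by (simp add: assoc[symmetric] spow_commute)
    finally have "a = rmult f (rmult f (f (spow f s (Suc k)) a) t) t'" using t' by simp
    also have "\<dots> = rmult f (f (spow f s (Suc k)) a) (mult1 f t t')"
      using a s spow_closed t t'(1) by (intro rmult_rmult) auto
    finally show ?case using t t' by blast
  qed
  then obtain t' where t': "t' \<in> one_adjoined S" "a = rmult f (f (spow f s n) a) t'" by blast
  have "f (spow f s n) a = z" using s(2) zero[OF a] by simp
  then show ?thesis using t' zero unfolding one_adjoined_def rmult_def by (auto split: option.splits)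
qed

lemma eq_zero_if_nilpotent_right_factor:
  assumes zero: "\<And>x. x \<in> S \<Longrightarrow> f z x = z \<and> f x z = z"
    and a: "a \<in> S" and s: "s \<in> S" "spow f s n = z" and t: "t \<in> one_adjoined S"
    and eq: "a = lmult f t (f a s)"
  shows "a = z"
proof -
  have "\<exists>t'\<in>one_adjoined S. a = lmult f t' (f a (spow f s k))" for k
  proof (induction k)
    case 0 then show ?case using t eq by auto
  next
    case (Suc k)
    then obtain t' where t': "t' \<in> one_adjoined S" "a = lmult f t' (f a (spow f s k))" by auto
    have sk: "spow f s k \<in> S" using spow_closed s by auto
    have "f a (spow f s k) = rmult f (lmult f t (f a s)) (Some (spow f s k))"
      using eq by (simp add: rmult_def)
    also have "\<dots> = lmult f t (f (f a s) (spow f s k))"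
      using sk t a s by (subst lmult_rmult[symmetric]) (auto simp: one_adjoined_def rmult_def)
    also have "f (f a s) (spow f s k) = f a (spow f s (Suc k))"
      using sk s a by (simp add: assoc)
    finally have "a = lmult f t' (lmult f t (f a (spow f s (Suc k))))" using t' by simp
    also have "\<dots> = lmult f (mult1 f t' t) (f a (spow f s (Suc k)))"
      using a s spow_closed t t'(1) by (intro lmult_lmult) auto
    finally show ?case using t t' by blast
  qed
  then obtain t' where t': "t' \<in> one_adjoined S" "a = lmult f t' (f a (spow f s n))" by blast
  have "f a (spow f s n) = z" using s(2) zero[OF a] by simp
  then show ?thesis using t' zero unfolding one_adjoined_def lmult_def by (auto split: option.splits)
qed

end

text \<open>
  The quotient \<open>S/\<mu>\<close> is modelled by a set of representatives inside \<open>S\<close>, so that it lives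
  in the same type as \<open>S\<close>.
\<close>

locale semigroup_quotient = carrier_semigroup +
  fixes \<mu> :: "'a rel"
  assumes congruence: "congruence_on S f \<mu>"
begin

definition rep :: "'a \<Rightarrow> 'a" where
  "rep x = (SOME y. (x, y) \<in> \<mu>)"

definition reps :: "'a set" where
  "reps = rep ` S"

definition qmult :: "'a \<Rightarrow> 'a \<Rightarrow> 'a" where
  "qmult x y = rep (f x y)"

definition lift :: "'a rel \<Rightarrow> 'a rel" where
  "lift R = {(x, y). x \<in> S \<and> y \<in> S \<and> (rep x, rep y) \<in> R}"

lemma rep_related: "x \<in> S \<Longrightarrow> (x, rep x) \<in> \<mu>"
  unfolding rep_def by (rule someI) (rule congruence_on_refl[OF congruence])

lemma rep_eq_iff:
  assumes "x \<in> S" "y \<in> S"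
  shows "rep x = rep y \<longleftrightarrow> (x, y) \<in> \<mu>"
proof
  assume "rep x = rep y"
  then have "(x, rep y) \<in> \<mu>" "(rep y, y) \<in> \<mu>"
    using rep_related assms congruence_on_sym[OF congruence] by metis+
  then show "(x, y) \<in> \<mu>" by (rule congruence_on_trans[OF congruence])
next
  assume "(x, y) \<in> \<mu>"
  then have "(\<lambda>w. (x, w) \<in> \<mu>) = (\<lambda>w. (y, w) \<in> \<mu>)"
    using congruence_on_sym[OF congruence] congruence_on_trans[OF congruence] by blast
  then show "rep x = rep y" unfolding rep_def by simp
qed

lemma rep_in: "x \<in> S \<Longrightarrow> rep x \<in> S"
  using congruence_on_memD[OF congruence rep_related] by blast

lemma rep_rep: "x \<in> S \<Longrightarrow> rep (rep x) = rep x"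
  using rep_eq_iff[OF rep_in] congruence_on_sym[OF congruence rep_related] by blast

lemma reps_subset: "reps \<subseteq> S"
  unfolding reps_def using rep_in by auto

lemma rep_reps: "x \<in> reps \<Longrightarrow> rep x = x"
  unfolding reps_def using rep_rep by auto

lemma qmult_rep:
  assumes "x \<in> S" "y \<in> S"
  shows "qmult (rep x) (rep y) = rep (f x y)"
proof -
  have "(f (rep x) (rep y), f x y) \<in> \<mu>"
    using assms congruence_on_mult[OF congruence] congruence_on_sym[OF congruence rep_related]
    by blast
  then show ?thesis unfolding qmult_def using assms rep_in rep_eq_iff by simp
qed

lemma qmult_closed: "x \<in> reps \<Longrightarrow> y \<in> reps \<Longrightarrow> qmult x y \<in> reps"
  unfolding reps_def qmult_def using rep_in by auto

lemma semigroup_on_reps: "semigroup_on reps qmult"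
  unfolding semigroup_on_def
proof (intro conjI ballI qmult_closed)
  fix x y w assume "x \<in> reps" "y \<in> reps" "w \<in> reps"
  then obtain a b c where "a \<in> S" "b \<in> S" "c \<in> S" "x = rep a" "y = rep b" "w = rep c"
    unfolding reps_def by auto
  then show "qmult (qmult x y) w = qmult x (qmult y w)"
    by (simp add: qmult_rep assoc)
qed

lemma spow_qmult_rep: "x \<in> S \<Longrightarrow> spow qmult (rep x) n = rep (spow f x n)"
  by (induction n) (auto simp: qmult_rep spow_closed)

lemma congruence_on_lift:
  assumes R: "congruence_on reps qmult R"
  shows "congruence_on S f (lift R)"
proof (rule congruence_onI)
  show "lift R \<subseteq> S \<times> S" unfolding lift_def by auto
  show "(x, x) \<in> lift R" if "x \<in> S" for x
    using that congruence_on_refl[OF R] unfolding lift_def reps_def by auto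
  show "sym (lift R)" unfolding lift_def sym_def using congruence_on_sym[OF R] by auto
  show "trans (lift R)" unfolding lift_def trans_def using congruence_on_trans[OF R] by blast
  fix a b c assume ab: "(a, b) \<in> lift R" and c: "c \<in> S"
  then have "rep c \<in> reps" unfolding reps_def by auto
  then have "(qmult (rep c) (rep a), qmult (rep c) (rep b)) \<in> R \<and>
      (qmult (rep a) (rep c), qmult (rep b) (rep c)) \<in> R"
    using congruence_on_compat[OF R] ab unfolding lift_def by auto
  then show "(f c a, f c b) \<in> lift R \<and> (f a c, f b c) \<in> lift R"
    using ab c qmult_rep unfolding lift_def by auto
qed

lemma lift_restrict:
  assumes "congruence_on reps qmult R" "x \<in> reps" "y \<in> reps"
  shows "(x, y) \<in> lift R \<longleftrightarrow> (x, y) \<in> R"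
  using assms reps_subset rep_reps unfolding lift_def by auto

lemma subset_if_lift_subset:
  assumes R1: "congruence_on reps qmult R1" and R2: "congruence_on reps qmult R2"
    and "lift R1 \<subseteq> lift R2"
  shows "R1 \<subseteq> R2"
proof
  fix xy assume xy: "xy \<in> R1"
  then obtain x y where "xy = (x, y)" "x \<in> reps" "y \<in> reps"
    using congruence_on_subset[OF R1] by auto
  then show "xy \<in> R2" using xy assms lift_restrict by blast
qed

lemma delta_semigroup_reps:
  assumes "delta_semigroup S f"
  shows "delta_semigroup reps qmult"
  unfolding delta_semigroup_def
proof (intro conjI allI impI semigroup_on_reps)
  fix R1 R2 assume R: "congruence_on reps qmult R1" "congruence_on reps qmult R2"
  then have "lift R1 \<subseteq> lift R2 \<or> lift R2 \<subseteq> lift R1"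
    using assms congruence_on_lift unfolding delta_semigroup_def by blast
  then show "R1 \<subseteq> R2 \<or> R2 \<subseteq> R1" using R subset_if_lift_subset by blast
qed

lemma congruence_on_reps_trivial:
  assumes maximal: "\<And>R. congruence_on S f R \<Longrightarrow> (p, q) \<notin> R \<Longrightarrow> R \<subseteq> \<mu>"
    and R: "congruence_on reps qmult R" "(rep p, rep q) \<notin> R"
    and xy: "(x, y) \<in> R"
  shows "x = y"
proof -
  have "(p, q) \<notin> lift R" using R(2) unfolding lift_def by auto
  then have "lift R \<subseteq> \<mu>" using maximal congruence_on_lift[OF R(1)] by blast
  moreover have x: "x \<in> reps" "y \<in> reps" using congruence_on_memD[OF R(1) xy] by auto
  moreover have "(x, y) \<in> lift R" using lift_restrict[OF R(1) x] xy by blast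
  ultimately have "rep x = rep y" using rep_eq_iff reps_subset by blast
  then show ?thesis using rep_reps x by simp
qed

end

locale t2r_semigroup = carrier_semigroup +
  fixes S0 :: "'a set" and u v z :: 'a
  assumes S_eq: "S = S0 \<union> {u, v}" and u_notin: "u \<notin> S0" and v_notin: "v \<notin> S0"
    and u_neq_v: "u \<noteq> v"
    and ideal: "ideal_of S f S0" and nil: "nil_semigroup_with_zero S0 f z"
    and right_zero: "x \<in> {u, v} \<Longrightarrow> y \<in> {u, v} \<Longrightarrow> f x y = y"

lemma T2R_iff:
  "T2R S f S0 S1 z \<longleftrightarrow> delta_semigroup S f \<and> card S0 \<noteq> 1 \<and>
     (\<exists>u v. S1 = {u, v} \<and> t2r_semigroup S f S0 u v z)"
  unfolding T2R_def t2r_semigroup_def t2r_semigroup_axioms_def carrier_semigroup_def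
    delta_semigroup_def
  by (auto 0 4)

context t2r_semigroup
begin

lemma S0_subset: "S0 \<subseteq> S" and u_in [simp]: "u \<in> S" and v_in [simp]: "v \<in> S"
  using S_eq by auto

lemma S0_in [intro]: "x \<in> S0 \<Longrightarrow> x \<in> S"
  using S0_subset by auto

lemma S_cases: "x \<in> S \<Longrightarrow> x \<in> S0 \<or> x = u \<or> x = v"
  using S_eq by auto

lemma mult_S0_right [intro]: "s \<in> S \<Longrightarrow> x \<in> S0 \<Longrightarrow> f s x \<in> S0"
  and mult_S0_left [intro]: "s \<in> S \<Longrightarrow> x \<in> S0 \<Longrightarrow> f x s \<in> S0"
  using ideal unfolding ideal_of_def by blast+

lemma right_zero_simps [simp]: "f u u = u" "f u v = v" "f v u = u" "f v v = v"
  using right_zero by auto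

lemma zero_in [simp]: "z \<in> S0"
  and zero_S0: "x \<in> S0 \<Longrightarrow> f z x = z \<and> f x z = z"
  and nilpotent: "x \<in> S0 \<Longrightarrow> \<exists>n. spow f x n = z"
  using nil unfolding nil_semigroup_with_zero_def by blast+

text \<open>
  The zero of \<open>S\<^sub>0\<close> is a zero of \<open>S\<close>: for \<open>w \<in> {u, v}\<close>, \<open>0w \<in> S\<^sub>0\<close> is idempotent, hence \<open>0\<close>.
\<close>

lemma zero_left: assumes "x \<in> S" shows "f z x = z"
proof -
  have "f z w = z" if w: "w \<in> {u, v}" for w
  proof -
    have "f z (f z w) = f z w" using w assoc[of z z w] zero_S0[of z] S0_in[OF zero_in] by auto
    then show ?thesis using zero_S0[of "f z w"] mult_S0_left[OF _ zero_in] w by auto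
  qed
  then show ?thesis using S_cases assms zero_S0 by blast
qed

lemma zero_right: assumes "x \<in> S" shows "f x z = z"
proof -
  have "f w z = z" if w: "w \<in> {u, v}" for w
  proof -
    have "f (f w z) z = f w z" using w assoc[of w z z] zero_S0[of z] S0_in[OF zero_in] by auto
    then show ?thesis using zero_S0[of "f w z"] mult_S0_right[OF _ zero_in] w by auto
  qed
  then show ?thesis using S_cases assms zero_S0 by blast
qed

lemma Jideal_zero: "Jideal S f z = {z}"
  unfolding Jideal_def using zero_left zero_right by auto

lemma fixed_by_uv: "x \<in> S \<Longrightarrow> f u x = x \<Longrightarrow> w \<in> {u, v} \<Longrightarrow> f w x = x"
  using assoc[of v u x] by auto

lemma one_adjoined_cases:
  "s \<in> one_adjoined S \<Longrightarrow> s \<in> one_adjoined {u, v} \<or> (\<exists>a\<in>S0. s = Some a)"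
  unfolding one_adjoined_def using S_eq by auto

lemma one_adjoined_uv_subset: "one_adjoined {u, v} \<subseteq> one_adjoined S"
  unfolding one_adjoined_def by auto

lemma mult1_in_one_adjoined_uvD:
  assumes "s \<in> one_adjoined S" "t \<in> one_adjoined S" "mult1 f s t \<in> one_adjoined {u, v}"
  shows "s \<in> one_adjoined {u, v} \<and> t \<in> one_adjoined {u, v}"
  using assms u_notin v_notin unfolding one_adjoined_def mult1_def
  by (auto split: option.splits) (metis S_cases mult_S0_left mult_S0_right)+

lemma fixpoint_factors_in_one_adjoined_uv:
  assumes a: "a \<in> S" "a \<noteq> z" and s: "s \<in> one_adjoined S" and t: "t \<in> one_adjoined S"
    and eq: "a = rmult f (lmult f s a) t"
  shows "s \<in> one_adjoined {u, v} \<and> t \<in> one_adjoined {u, v}"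
proof -
  have zero: "\<And>x. x \<in> S \<Longrightarrow> f z x = z \<and> f x z = z" using zero_left zero_right by blast
  have "s \<in> one_adjoined {u, v}"
  proof (rule ccontr)
    assume "s \<notin> one_adjoined {u, v}"
    then obtain b where b: "b \<in> S0" "s = Some b" using one_adjoined_cases s by blast
    then obtain n where n: "spow f b n = z" using nilpotent by blast
    have "a = rmult f (f b a) t" using eq b by (simp add: lmult_def)
    then show False
      using eq_zero_if_nilpotent_left_factor[OF zero a(1) S0_in[OF b(1)] n t] a(2) by blast
  qed
  moreover have "t \<in> one_adjoined {u, v}"
  proof (rule ccontr)
    assume "t \<notin> one_adjoined {u, v}"
    then obtain b where b: "b \<in> S0" "t = Some b" using one_adjoined_cases t by blast
    then obtain n where n: "spow f b n = z" using nilpotent by blast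
    have "a = lmult f s (f a b)"
      using eq b S0_in[OF b(1)] s a lmult_rmult[of s "Some b" a] by (auto simp: one_adjoined_def rmult_def)
    then show False
      using eq_zero_if_nilpotent_right_factor[OF zero a(1) S0_in[OF b(1)] n s] a(2) by blast
  qed
  ultimately show ?thesis ..
qed

lemma Jclass_factors:
  assumes p: "p \<in> S" "p \<noteq> z" and x: "x \<in> Jclass S f p"
  obtains s t s' t' where "s \<in> one_adjoined {u, v}" "t \<in> one_adjoined {u, v}"
    "s' \<in> one_adjoined {u, v}" "t' \<in> one_adjoined {u, v}"
    "x = rmult f (lmult f s p) t" "p = rmult f (lmult f s' x) t'"
proof -
  have xS: "x \<in> S" and Jx: "Jideal S f x = Jideal S f p" using x unfolding Jclass_def by auto
  have "x \<in> Jideal S f p" "p \<in> Jideal S f x" using Jx self_in_Jideal by metis+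
  then obtain s t s' t' where st: "s \<in> one_adjoined S" "t \<in> one_adjoined S"
      "x = rmult f (lmult f s p) t"
    and st': "s' \<in> one_adjoined S" "t' \<in> one_adjoined S" "p = rmult f (lmult f s' x) t'"
    unfolding Jideal_one_adjoined by blast
  have "p = rmult f (lmult f s' (rmult f (lmult f s p) t)) t'"
    unfolding st(3)[symmetric] by (rule st'(3))
  also have "\<dots> = rmult f (lmult f (mult1 f s' s) p) (mult1 f t t')"
    using st(1,2) st'(1,2) p(1) by (simp add: lmult_rmult lmult_lmult rmult_rmult)
  finally have "p = rmult f (lmult f (mult1 f s' s) p) (mult1 f t t')" .
  then have "mult1 f s' s \<in> one_adjoined {u, v}" "mult1 f t t' \<in> one_adjoined {u, v}"
    using fixpoint_factors_in_one_adjoined_uv p st(1,2) st'(1,2) by auto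
  then have "s \<in> one_adjoined {u, v}" "t \<in> one_adjoined {u, v}"
    "s' \<in> one_adjoined {u, v}" "t' \<in> one_adjoined {u, v}"
    using mult1_in_one_adjoined_uvD st(1,2) st'(1,2) by blast+
  then show thesis using that st(3) st'(3) by blast
qed

lemma fixed_by_uv_left_factor:
  assumes w: "w \<in> {u, v}" and r: "r \<in> S"
    and s: "s \<in> one_adjoined {u, v}" and t: "t \<in> one_adjoined {u, v}"
    and p: "p = rmult f (lmult f s (f w r)) t"
  shows "f w p = p"
proof -
  have wS: "w \<in> S" using w by auto
  define r' where "r' = rmult f r t"
  have r'S: "r' \<in> S" unfolding r'_def using r t one_adjoined_uv_subset by auto
  have "f y (f w r) = f w r" if "y \<in> {u, v}" for y
    using assoc[of y w r] that wS r right_zero[OF that w] by auto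
  then have "lmult f s (f w r) = f w r" using s unfolding one_adjoined_def lmult_def by auto
  then have "p = rmult f (f w r) t" using p by simp
  also have "\<dots> = f w r'"
    unfolding r'_def using t assoc[OF wS r] unfolding one_adjoined_def rmult_def by auto
  finally show ?thesis using assoc[OF wS wS r'S] right_zero[OF w w] by simp
qed

lemma Jclass_subset_pair:
  assumes p: "p \<in> S" "p \<noteq> z" and pu: "f p u = p"
  shows "Jclass S f p \<subseteq> {p, f p v}"
proof
  fix x assume x: "x \<in> Jclass S f p"
  define q where "q = f p v"
  have qu: "f q u = p" and qv: "f q v = q" unfolding q_def using p pu by (simp_all add: assoc)
  obtain s t s' t' where U: "s \<in> one_adjoined {u, v}" "t \<in> one_adjoined {u, v}"
      "s' \<in> one_adjoined {u, v}" "t' \<in> one_adjoined {u, v}"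
    and xp: "x = rmult f (lmult f s p) t" and px: "p = rmult f (lmult f s' x) t'"
    using Jclass_factors[OF p x] .
  have rmult_pq: "y \<in> {p, q} \<Longrightarrow> r \<in> one_adjoined {u, v} \<Longrightarrow> rmult f y r \<in> {p, q}" for y r
    unfolding one_adjoined_def rmult_def using pu qu qv q_def[symmetric] by auto
  define r where "r = rmult f p t"
  have r: "r \<in> {p, q}" unfolding r_def using rmult_pq U(2) by simp
  then have rS: "r \<in> S" using p unfolding q_def by auto
  have "s \<in> one_adjoined S" "t \<in> one_adjoined S" using U(1,2) one_adjoined_uv_subset by auto
  then have x_eq: "x = lmult f s r" unfolding xp r_def using p by (simp add: lmult_rmult)
  show "x \<in> {p, f p v}"
  proof (cases s)
    case None
    then show ?thesis using x_eq r q_def by (simp add: lmult_def)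
  next
    case (Some w)
    then have w: "w \<in> {u, v}" and wS: "w \<in> S" using U(1) unfolding one_adjoined_def by auto
    have "p = rmult f (lmult f s' (f w r)) t'" using px x_eq Some by (simp add: lmult_def)
    then have wp: "f w p = p" using fixed_by_uv_left_factor[OF w rS U(3,4)] by blast
    then have "f w q = q" unfolding q_def using assoc[of w p v] wS p by simp
    then show ?thesis using x_eq Some r wp q_def by (auto simp: lmult_def)
  qed
qed

lemma Jclass_eq_pair:
  assumes p: "p \<in> S" and pu: "f p u = p" and pv: "f p v \<noteq> p"
  shows "Jclass S f p = {p, f p v}"
proof -
  have q: "f p v \<in> S" and qu: "f (f p v) u = p" using p pu by (simp_all add: assoc)
  have pz: "p \<noteq> z" using pv zero_left by auto
  have "Jideal S f (f p v) = Jideal S f p"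
    using Jideal_subset_Jideal[OF p] Jideal_subset_Jideal[OF q]
      right_in_Jideal[of v S f p] right_in_Jideal[of u S f "f p v"] qu by auto
  then have "{p, f p v} \<subseteq> Jclass S f p" using p q unfolding Jclass_def by auto
  with Jclass_subset_pair[OF p pz pu] show ?thesis by blast
qed

end

context t2r_semigroup
begin

definition collapse_uv :: "'a rel" where
  "collapse_uv = Id_on S \<union> {u, v} \<times> {u, v}"

text \<open>
  If no element of \<open>S\<^sub>0\<close> separates \<open>u\<close> and \<open>v\<close>, then \<open>collapse_uv \<union> fixed_block\<close> is a
  congruence containing \<open>(u, v)\<close>; comparing it with the Rees congruence of \<open>S\<^sub>0\<close> shows that
  \<open>u\<close> acts as a left identity on \<open>S\<^sub>0\<close>, which makes \<open>collapse_uv\<close> itself a congruence.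
\<close>

definition fixed_block :: "'a rel" where
  "fixed_block = {(x, y). x \<in> S0 \<and> y \<in> S0 \<and> f u x = x \<and> f u y = y \<and> (\<forall>s\<in>S0. f s x = f s y)}"

lemma mult_left_collapse_uv:
  assumes uv: "\<And>x. x \<in> S0 \<Longrightarrow> f x u = f x v"
    and c: "c \<in> S" and w: "w \<in> {u, v}" "w' \<in> {u, v}"
  shows "(f c w, f c w') \<in> collapse_uv"
proof (cases "c \<in> S0")
  case True
  then have "f c w = f c w'" using uv w by auto
  then show ?thesis using c w unfolding collapse_uv_def by auto
next
  case False
  then have "c \<in> {u, v}" using S_cases[OF c] by auto
  then show ?thesis using right_zero w unfolding collapse_uv_def by auto
qed

lemma mult_right_collapse_uv:
  assumes "c \<in> {u, v}" "w \<in> {u, v}" "w' \<in> {u, v}"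
  shows "(f w c, f w' c) \<in> collapse_uv"
  using assms right_zero unfolding collapse_uv_def by auto

lemma mult_right_uv_fixed_block:
  assumes uv: "\<And>x. x \<in> S0 \<Longrightarrow> f x u = f x v"
    and c: "c \<in> S0" and w: "w \<in> {u, v}" "w' \<in> {u, v}"
  shows "(f w c, f w' c) \<in> fixed_block"
proof -
  have "f u (f y c) = f y c" if "y \<in> {u, v}" for y
    using assoc[of u y c] that S0_in[OF c] right_zero[of u y] by auto
  moreover have "f s (f w c) = f s (f w' c)" if s: "s \<in> S0" for s
  proof -
    have "f s w = f s w'" using uv[OF s] w by auto
    then show ?thesis using assoc[of s w c] assoc[of s w' c] S0_in[OF s] S0_in[OF c] w by auto
  qed
  ultimately show ?thesis unfolding fixed_block_def using w c by auto
qed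

lemma mult_left_fixed_block:
  assumes xy: "(x, y) \<in> fixed_block" and c: "c \<in> S"
  shows "(f c x, f c y) \<in> collapse_uv \<union> fixed_block"
proof (cases "c \<in> S0")
  case True
  then have "f c x = f c y" using xy unfolding fixed_block_def by auto
  then show ?thesis using xy c unfolding fixed_block_def collapse_uv_def by auto
next
  case False
  then have "c \<in> {u, v}" using S_cases[OF c] by auto
  then have "f c x = x" "f c y = y" using xy fixed_by_uv unfolding fixed_block_def by auto
  then show ?thesis using xy by auto
qed

lemma mult_right_fixed_block:
  assumes xy: "(x, y) \<in> fixed_block" and c: "c \<in> S"
  shows "(f x c, f y c) \<in> fixed_block"
proof -
  have x: "x \<in> S0" "f u x = x" and y: "y \<in> S0" "f u y = y"
    and s: "\<And>s. s \<in> S0 \<Longrightarrow> f s x = f s y"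
    using xy unfolding fixed_block_def by auto
  have "f u (f x c) = f x c" "f u (f y c) = f y c"
    using assoc[of u x c] assoc[of u y c] S0_in[OF x(1)] S0_in[OF y(1)] x y c by auto
  moreover have "f s (f x c) = f s (f y c)" if "s \<in> S0" for s
    using assoc[of s x c] assoc[of s y c] s[OF that] S0_in[OF x(1)] S0_in[OF y(1)] c
      S0_in[OF that] by auto
  ultimately show ?thesis unfolding fixed_block_def using x y c by auto
qed

lemma congruence_on_collapse_uv_fixed_block:
  assumes uv: "\<And>x. x \<in> S0 \<Longrightarrow> f x u = f x v"
  shows "congruence_on S f (collapse_uv \<union> fixed_block)"
proof (rule congruence_onI)
  show "collapse_uv \<union> fixed_block \<subseteq> S \<times> S"
    unfolding collapse_uv_def fixed_block_def by auto
  show "sym (collapse_uv \<union> fixed_block)"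
    unfolding collapse_uv_def fixed_block_def sym_def by auto
  show "trans (collapse_uv \<union> fixed_block)"
    unfolding collapse_uv_def fixed_block_def trans_def using u_notin v_notin by auto
  fix a b c assume ab: "(a, b) \<in> collapse_uv \<union> fixed_block" and c: "c \<in> S"
  then consider "(a, b) \<in> fixed_block" | "a = b" "a \<in> S" | "a \<in> {u, v}" "b \<in> {u, v}"
    unfolding collapse_uv_def by auto
  then show "(f c a, f c b) \<in> collapse_uv \<union> fixed_block \<and>
      (f a c, f b c) \<in> collapse_uv \<union> fixed_block"
  proof cases
    case 1
    then show ?thesis using mult_left_fixed_block mult_right_fixed_block c by blast
  next
    case 2
    then show ?thesis using c unfolding collapse_uv_def by auto
  next
    case 3
    moreover have "(f a c, f b c) \<in> collapse_uv \<union> fixed_block"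
    proof (cases "c \<in> S0")
      case True
      then show ?thesis using mult_right_uv_fixed_block[OF uv True 3] by blast
    next
      case False
      then have "c \<in> {u, v}" using S_cases[OF c] by auto
      then show ?thesis using mult_right_collapse_uv 3 by blast
    qed
    ultimately show ?thesis using mult_left_collapse_uv[OF uv c] by blast
  qed
qed (auto simp: collapse_uv_def)

lemma fixed_by_u_if_not_separating:
  assumes delta: "delta_semigroup S f" and uv: "\<And>x. x \<in> S0 \<Longrightarrow> f x u = f x v"
    and x: "x \<in> S0"
  shows "f u x = x"
proof (cases "x = z")
  case True
  then show ?thesis using zero_right by simp
next
  case False
  have "(u, v) \<in> collapse_uv \<union> fixed_block" "(u, v) \<notin> rees_congruence S S0"
    using u_notin u_neq_v unfolding collapse_uv_def rees_congruence_def by auto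
  then have "rees_congruence S S0 \<subseteq> collapse_uv \<union> fixed_block"
    using delta congruence_on_rees[OF ideal] congruence_on_collapse_uv_fixed_block[OF uv]
    unfolding delta_semigroup_def by blast
  moreover have "(x, z) \<in> rees_congruence S S0" using x unfolding rees_congruence_def by auto
  ultimately have "(x, z) \<in> fixed_block"
    using False x u_notin v_notin unfolding collapse_uv_def by auto
  then show ?thesis unfolding fixed_block_def by auto
qed

lemma congruence_on_collapse_uv:
  assumes uv: "\<And>x. x \<in> S0 \<Longrightarrow> f x u = f x v" and fixed: "\<And>x. x \<in> S0 \<Longrightarrow> f u x = x"
  shows "congruence_on S f collapse_uv"
proof (rule congruence_onI)
  fix a b c assume ab: "(a, b) \<in> collapse_uv" and c: "c \<in> S"
  then consider "a = b" "a \<in> S" | "a \<in> {u, v}" "b \<in> {u, v}" unfolding collapse_uv_def by auto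
  then show "(f c a, f c b) \<in> collapse_uv \<and> (f a c, f b c) \<in> collapse_uv"
  proof cases
    case 1
    then show ?thesis using c unfolding collapse_uv_def by auto
  next
    case 2
    moreover have "(f a c, f b c) \<in> collapse_uv"
    proof (cases "c \<in> S0")
      case True
      then have "f a c = c" "f b c = c" using fixed_by_uv[OF S0_in[OF True] fixed[OF True]] 2 by auto
      then show ?thesis using c unfolding collapse_uv_def by auto
    next
      case False
      then show ?thesis using mult_right_collapse_uv S_cases[OF c] 2 by blast
    qed
    ultimately show ?thesis using mult_left_collapse_uv[OF uv c] by blast
  qed
qed (auto simp: collapse_uv_def sym_def trans_def)

lemma exists_separating_element:
  assumes delta: "delta_semigroup S f" and card: "card S0 \<noteq> 1"
  shows "\<exists>c\<in>S0. f c u \<noteq> f c v"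
proof (rule ccontr)
  assume "\<not> ?thesis"
  then have uv: "\<And>x. x \<in> S0 \<Longrightarrow> f x u = f x v" by blast
  have "congruence_on S f collapse_uv"
    using congruence_on_collapse_uv[OF uv fixed_by_u_if_not_separating[OF delta uv]] .
  then have chain: "collapse_uv \<subseteq> rees_congruence S S0 \<or> rees_congruence S S0 \<subseteq> collapse_uv"
    using delta congruence_on_rees[OF ideal] unfolding delta_semigroup_def by blast
  have "S0 \<noteq> {z}" using card by auto
  then obtain a where a: "a \<in> S0" "a \<noteq> z" using zero_in by blast
  have "(u, v) \<in> collapse_uv" "(u, v) \<notin> rees_congruence S S0"
    "(a, z) \<in> rees_congruence S S0"
    using u_notin u_neq_v a unfolding collapse_uv_def rees_congruence_def by auto
  moreover have "(a, z) \<notin> collapse_uv"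
    using a u_notin v_notin unfolding collapse_uv_def by auto
  ultimately show False using chain by auto
qed

end

locale t2r_quotient = t2r_semigroup + semigroup_quotient +
  fixes c :: 'a
  assumes c_in: "c \<in> S0" and separates: "(f c u, f c v) \<notin> \<mu>"
begin

lemma S0_not_related_uv:
  assumes x: "x \<in> S0" and w: "w \<in> {u, v}"
  shows "(x, w) \<notin> \<mu>"
proof
  assume xw: "(x, w) \<in> \<mu>"
  have "(spow f x k, w) \<in> \<mu>" for k
  proof (induction k)
    case (Suc k)
    then have "(f x (spow f x k), f w w) \<in> \<mu>" using congruence_on_mult[OF congruence xw] by blast
    then show ?case using right_zero[OF w w] by simp
  qed (use xw in simp)
  moreover obtain n where "spow f x n = z" using nilpotent x by blast
  ultimately have zw: "(z, w) \<in> \<mu>" by metis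
  have "(z, w') \<in> \<mu>" if w': "w' \<in> {u, v}" for w'
    using congruence_on_compat[OF congruence zw, of w'] w' zero_left right_zero[OF w w']
    by auto
  then have "(f c z, f c u) \<in> \<mu>" "(f c z, f c v) \<in> \<mu>"
    using congruence_on_compat[OF congruence] c_in by blast+
  then have "(f c u, f c v) \<in> \<mu>"
    using congruence_on_sym[OF congruence] congruence_on_trans[OF congruence] by blast
  then show False using separates by contradiction
qed

lemma rep_u_neq_rep_v: "rep u \<noteq> rep v"
proof
  assume "rep u = rep v"
  then have "(u, v) \<in> \<mu>" using rep_eq_iff by simp
  then have "(f c u, f c v) \<in> \<mu>" using congruence_on_compat[OF congruence] c_in by blast
  then show False using separates by contradiction
qed

lemma rep_uv_notin:
  assumes w: "w \<in> {u, v}"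
  shows "rep w \<notin> rep ` S0"
proof
  assume "rep w \<in> rep ` S0"
  then obtain x where x: "x \<in> S0" "rep x = rep w" by auto
  then have "(x, w) \<in> \<mu>" using rep_eq_iff[of x w] w S0_in by auto
  then show False using S0_not_related_uv x(1) w by blast
qed

lemma ideal_of_rep_S0: "ideal_of reps qmult (rep ` S0)"
  unfolding ideal_of_def
proof (intro conjI ballI)
  show "rep ` S0 \<subseteq> reps" unfolding reps_def using S0_subset by auto
  show "rep ` S0 \<noteq> {}" using zero_in by blast
  fix s x assume "s \<in> reps" "x \<in> rep ` S0"
  then obtain a b where "a \<in> S" "b \<in> S0" "s = rep a" "x = rep b" unfolding reps_def by auto
  then show "qmult s x \<in> rep ` S0" "qmult x s \<in> rep ` S0" using qmult_rep by auto
qed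

lemma nil_semigroup_with_zero_rep_S0: "nil_semigroup_with_zero (rep ` S0) qmult (rep z)"
proof -
  have "semigroup_on (rep ` S0) qmult"
    unfolding semigroup_on_def
  proof (intro conjI ballI)
    fix x y assume "x \<in> rep ` S0" "y \<in> rep ` S0"
    then obtain a b where "a \<in> S0" "b \<in> S0" "x = rep a" "y = rep b" by auto
    then show "qmult x y \<in> rep ` S0" using qmult_rep S0_in by auto
  next
    fix x y w assume "x \<in> rep ` S0" "y \<in> rep ` S0" "w \<in> rep ` S0"
    then have "x \<in> reps" "y \<in> reps" "w \<in> reps" unfolding reps_def using S0_subset by auto
    then show "qmult (qmult x y) w = qmult x (qmult y w)"
      using semigroup_on_reps unfolding semigroup_on_def by blast
  qed
  moreover have "qmult (rep z) x = rep z \<and> qmult x (rep z) = rep z" if x: "x \<in> rep ` S0" for x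
  proof -
    obtain b where "b \<in> S0" "x = rep b" using x by auto
    then show ?thesis using qmult_rep[of z b] qmult_rep[of b z] zero_S0 S0_in by simp
  qed
  moreover have "\<exists>n. spow qmult x n = rep z" if x: "x \<in> rep ` S0" for x
  proof -
    obtain b where b: "b \<in> S0" "x = rep b" using x by auto
    then obtain n where "spow f b n = z" using nilpotent by blast
    then show ?thesis using spow_qmult_rep[OF S0_in[OF b(1)]] b(2) by metis
  qed
  ultimately show ?thesis unfolding nil_semigroup_with_zero_def by auto
qed

lemma t2r_semigroup_reps: "t2r_semigroup reps qmult (rep ` S0) (rep u) (rep v) (rep z)"
proof (unfold_locales)
  show "semigroup_on reps qmult" by (rule semigroup_on_reps)
  show "reps = rep ` S0 \<union> {rep u, rep v}" unfolding reps_def using S_eq by auto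
  show "rep u \<notin> rep ` S0" "rep v \<notin> rep ` S0" using rep_uv_notin by auto
  show "rep u \<noteq> rep v" by (rule rep_u_neq_rep_v)
  show "ideal_of reps qmult (rep ` S0)" by (rule ideal_of_rep_S0)
  show "nil_semigroup_with_zero (rep ` S0) qmult (rep z)" by (rule nil_semigroup_with_zero_rep_S0)
  show "qmult x y = y" if xy: "x \<in> {rep u, rep v}" "y \<in> {rep u, rep v}" for x y
  proof -
    obtain w w' where "w \<in> {u, v}" "w' \<in> {u, v}" "x = rep w" "y = rep w'" using xy by auto
    then show ?thesis using qmult_rep[of w w'] right_zero by auto
  qed
qed

sublocale quotient: t2r_semigroup reps qmult "rep ` S0" "rep u" "rep v" "rep z"
  by (rule t2r_semigroup_reps)

lemma qmult_rep_separating: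
  assumes "w \<in> {u, v}"
  shows "qmult (rep (f c u)) (rep w) = rep (f c w)"
proof -
  have "f (f c u) w = f c w" using assoc[of c u w] assms S0_in[OF c_in] right_zero[of u w] by auto
  then show ?thesis using qmult_rep[of "f c u" w] assms S0_in[OF c_in] by auto
qed

lemma rep_separating_neq: "rep (f c u) \<noteq> rep (f c v)"
  using separates rep_eq_iff[of "f c u" "f c v"] S0_in[OF c_in] by auto

lemma Jclass_rep_separating: "Jclass reps qmult (rep (f c u)) = {rep (f c u), rep (f c v)}"
proof -
  have "f c u \<in> S" using S0_in[OF c_in] by simp
  then have "rep (f c u) \<in> reps" unfolding reps_def by (rule imageI)
  then show ?thesis
    using quotient.Jclass_eq_pair[of "rep (f c u)"] qmult_rep_separating[of u]
      qmult_rep_separating[of v] rep_separating_neq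
    by simp
qed

lemma Iideal_rep_separating:
  assumes maximal: "\<And>R. congruence_on S f R \<Longrightarrow> (f c u, f c v) \<notin> R \<Longrightarrow> R \<subseteq> \<mu>"
  shows "Iideal reps qmult (rep (f c u)) = {rep z}"
proof -
  define b where "b = rep (f c u)"
  define K where "K = {y \<in> reps. b \<notin> Jideal reps qmult y}"
  have cuv: "f c u \<in> S" "f c v \<in> S" using S0_in[OF c_in] by auto
  have b: "b \<in> reps" unfolding b_def reps_def using cuv by blast
  have "qmult b (rep v) \<noteq> b"
    using qmult_rep_separating[of v] rep_separating_neq unfolding b_def by auto
  then have bz: "b \<noteq> rep z" using quotient.zero_left[OF quotient.v_in] by auto
  have z: "rep z \<in> reps" using quotient.S0_in[OF quotient.zero_in] .
  then have zK: "rep z \<in> K" unfolding K_def using quotient.Jideal_zero bz by simp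
  then have "ideal_of reps qmult K"
    unfolding K_def using quotient.ideal_of_not_above[of "rep z" b] by simp
  then have "congruence_on reps qmult (rees_congruence reps K)"
    by (rule quotient.congruence_on_rees)
  moreover have "(b, rep (f c v)) \<notin> rees_congruence reps K"
    using rep_separating_neq self_in_Jideal unfolding rees_congruence_def K_def b_def by auto
  ultimately have K: "y = rep z" if "y \<in> K" for y
    using congruence_on_reps_trivial[OF maximal, where R = "rees_congruence reps K"] zK that
    unfolding rees_congruence_def b_def by blast
  have zJ: "rep z \<in> Jideal reps qmult b"
    using right_in_Jideal[OF z, of qmult b] quotient.zero_right[OF b] by simp
  have bJ: "b \<notin> Jideal reps qmult (rep z)" using quotient.Jideal_zero bz by simp
  have J: "y = rep z" if "y \<in> Jideal reps qmult b" "b \<notin> Jideal reps qmult y" for y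
    using that quotient.Jideal_subset[OF b] by (intro K) (auto simp: K_def)
  have "Iideal reps qmult b = {rep z}"
  proof (rule set_eqI)
    fix y
    show "y \<in> Iideal reps qmult b \<longleftrightarrow> y \<in> {rep z}"
      using quotient.Iideal_iff[OF b, of y] zJ bJ J[of y] by blast
  qed
  then show ?thesis unfolding b_def .
qed

end

context t2r_semigroup
begin

lemma exists_quotient_with_pair_Jclass:
  assumes delta: "delta_semigroup S f" and card: "card S0 \<noteq> 1"
  shows "\<exists>(S' :: 'a set) f' S0' S1' z' b. T2R S' f' S0' S1' z'
           \<and> b \<in> S0' \<and> card (Jclass S' f' b) = 2 \<and> Iideal S' f' b = {z'}"
proof -
  obtain c where c: "c \<in> S0" "f c u \<noteq> f c v" using exists_separating_element[OF delta card] by blast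
  define \<mu> where "\<mu> = \<Union>{R. congruence_on S f R \<and> (f c u, f c v) \<notin> R}"
  interpret t2r_quotient S f S0 u v z \<mu> c
    using congruence_on_largest_separating[OF delta c(2)] c(1) by unfold_locales (auto simp: \<mu>_def)
  have sep: "rep (f c u) \<in> rep ` S0" "rep (f c v) \<in> rep ` S0"
    using mult_S0_left[OF u_in c(1)] mult_S0_left[OF v_in c(1)] by blast+
  then have "card (rep ` S0) \<noteq> 1"
    using rep_separating_neq by (metis card_1_singletonE singletonD)
  then have "T2R reps qmult (rep ` S0) {rep u, rep v} (rep z)"
    using delta_semigroup_reps[OF delta] t2r_semigroup_reps unfolding T2R_iff by blast
  moreover have "card (Jclass reps qmult (rep (f c u))) = 2"
    using Jclass_rep_separating rep_separating_neq by simp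
  moreover have "Iideal reps qmult (rep (f c u)) = {rep z}"
    by (rule Iideal_rep_separating) (auto simp: \<mu>_def)
  ultimately show ?thesis using sep(1) by (intro exI conjI)
qed

end

theorem proposition5:
  fixes S :: "'a set" and f :: "'a \<Rightarrow> 'a \<Rightarrow> 'a" and S0 S1 :: "'a set" and z :: 'a
  assumes "T2R S f S0 S1 z"
  shows "\<exists>(S' :: 'a set) f' S0' S1' z' b. T2R S' f' S0' S1' z'
           \<and> b \<in> S0' \<and> card (Jclass S' f' b) = 2 \<and> Iideal S' f' b = {z'}"
proof -
  obtain u v where "t2r_semigroup S f S0 u v z" "delta_semigroup S f" "card S0 \<noteq> 1"
    using assms unfolding T2R_iff by blast
  then show ?thesis by (rule t2r_semigroup.exists_quotient_with_pair_Jclass)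
qed

end
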